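(* Let $\Omega$, $\Gamma_1$, $\Gamma_2$, $q$, $h$, $(f,g)$, the operator $T$ and the operator $\overline{T}$ on $H^{1/2}_{00}(\Gamma_2)'$ be as described below. Let $A$ be a segmenting matrix whose diagonal entries $d_k:=a_{k+1,k+1}$ satisfy $\sum_{k=1}^\infty d_k(1-d_k)=\infty$. Let $\varphi_1\in H^{1/2}_{00}(\Gamma_2)'$ and let $(\phi_k)$ be the sequence generated by the iteration $(\varphi_1,A,\overline{T})$. Then there exists a subsequence $(\phi_{k_j})$ such that $(I-\overline{T})\phi_{k_j}\to0$ strongly in $H^{1/2}_{00}(\Gamma_2)'$.
   Context: $\Omega\subset\mathbb{R}^n$ is an open bounded simply connected set with analytic boundary, $\Gamma_1\subset\partial\Omega$ an open connected manifold, $\Gamma_2:=\partial\Omega\setminus\Gamma_1$; $q\in C^\infty(\mathbb{R})$ with values in $[q_{min},q_{max}]$, $0<q_{min}<q_{max}<\infty$; $P(u)=-\nabla\cdot(q(u)\nabla u)$; $h\in L^2(\Omega)$; $(f,g)\in H^{1/2}(\Gamma_1)\times H^{1/2}_{00}(\Gamma_1)'$ are consistent Cauchy data (the problem $Pu=h$ in $\Omega$, $u=f$, $q(u)u_\nu=g$ on $\Gamma_1$ has an $H^1(\Omega)$ solution). $\|\cdot\|$ is the norm of the Hilbert space $H^{1/2}_{00}(\Gamma_2)'$. $T:=L_d\circ L_n$ where $L_n(\varphi):=w|_{\Gamma_2}$ with $w\in H^1(\Omega)$ the unique weak solution of $Pw=h$ in $\Omega$, $w=f$ on $\Gamma_1$,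 $q(w)w_\nu=\varphi$ on $\Gamma_2$, and $L_d(\psi):=q(v)v_\nu|_{\Gamma_2}$ with $v$ the unique weak solution of $Pv=h$ in $\Omega$, $q(v)v_\nu=g$ on $\Gamma_1$, $v=\psi$ on $\Gamma_2$. $\overline{T}\varphi:=T\varphi$ if $\|T\varphi\|\le\|\varphi\|$, and $\overline{T}\varphi:=\frac{\|\varphi\|}{\|T\varphi\|}T\varphi$ if $\|T\varphi\|\ge\|\varphi\|$. A segmenting matrix is an infinite lower triangular matrix $A=(a_{ij})_{i,j\ge1}$ with $a_{11}=1$, $a_{ij}\ge0$, $a_{ij}=0$ for $j>i$, $\sum_{j=1}^i a_{ij}=1$, and $a_{i+1,j}=(1-a_{i+1,i+1})a_{ij}$ for $j\le i$. The iteration $(\varphi_1,A,\overline{T})$: for $k=1,2,\dots$, $\phi_k:=\sum_{j=1}^k a_{kj}\varphi_j$ and $\varphi_{k+1}:=\overline{T}(\phi_k)$. *)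

theory Defs
  imports "HOL-Analysis.Analysis"
begin

definition Tbar :: "('a::real_normed_vector \<Rightarrow> 'a) \<Rightarrow> 'a \<Rightarrow> 'a" where
  "Tbar T x = (if norm (T x) \<le> norm x then T x else (norm x / norm (T x)) *\<^sub>R T x)"

text \<open>Segmenting matrix, indices i, j starting at 1 (entries at index 0 are irrelevant).\<close>
definition segmenting :: "(nat \<Rightarrow> nat \<Rightarrow> real) \<Rightarrow> bool" where
  "segmenting a \<longleftrightarrow>
     a 1 1 = 1 \<and>
     (\<forall>i\<ge>1. \<forall>j\<ge>1. a i j \<ge> 0) \<and>
     (\<forall>i\<ge>1. \<forall>j>i. a i j = 0) \<and>
     (\<forall>i\<ge>1. (\<Sum>j=1..i. a i j) = 1) \<and>
     (\<forall>i\<ge>1. \<forall>j. 1 \<le> j \<and> j \<le> i \<longrightarrow> a (i+1) j = (1 - a (i+1) (i+1)) * a i j)"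

definition segmenting_iteration ::
  "(nat \<Rightarrow> nat \<Rightarrow> real) \<Rightarrow> ('a::real_vector \<Rightarrow> 'a) \<Rightarrow> 'a \<Rightarrow> (nat \<Rightarrow> 'a) \<Rightarrow> (nat \<Rightarrow> 'a) \<Rightarrow> bool" where
  "segmenting_iteration a S x1 vphi phi \<longleftrightarrow>
     vphi 1 = x1 \<and>
     (\<forall>k\<ge>1. phi k = (\<Sum>j=1..k. a k j *\<^sub>R vphi j)) \<and>
     (\<forall>k\<ge>1. vphi (k+1) = S (phi k))"

end

theory Submission
  imports Defs
begin

text \<open>Each step of the iteration is a Mann step
  \<open>\<phi>\<^sub>k\<^sub>+\<^sub>1 = (1 - d\<^sub>k) \<phi>\<^sub>k + d\<^sub>k S \<phi>\<^sub>k\<close> with \<open>S = Tbar T\<close>, and \<open>S\<close> never increases the norm.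
  In a Hilbert space the norm of a convex combination then satisfies
  \<open>\<parallel>\<phi>\<^sub>k\<^sub>+\<^sub>1\<parallel>\<^sup>2 \<le> \<parallel>\<phi>\<^sub>k\<parallel>\<^sup>2 - d\<^sub>k (1 - d\<^sub>k) \<parallel>\<phi>\<^sub>k - S \<phi>\<^sub>k\<parallel>\<^sup>2\<close>, so the series
  \<open>\<Sum> d\<^sub>k (1 - d\<^sub>k) \<parallel>\<phi>\<^sub>k - S \<phi>\<^sub>k\<parallel>\<^sup>2\<close> telescopes to something bounded by \<open>\<parallel>\<phi>\<^sub>1\<parallel>\<^sup>2\<close>.
  Since \<open>\<Sum> d\<^sub>k (1 - d\<^sub>k)\<close> diverges, the residuals cannot stay away from \<open>0\<close>.
  Nothing about \<open>T\<close> beyond \<open>\<parallel>Tbar T x\<parallel> \<le> \<parallel>x\<parallel>\<close> is used.\<close>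

lemma norm_Tbar_le: "norm (Tbar T x) \<le> norm (x::'a::real_normed_vector)"
proof (cases "norm (T x) \<le> norm x")
  case False
  then have "norm (T x) > 0"
    using norm_ge_zero[of x] by linarith
  with False show ?thesis
    by (simp add: Tbar_def)
qed (simp add: Tbar_def)

lemma power2_norm_affine_combination:
  fixes x y :: "'a::real_inner"
  shows "(norm ((1 - d) *\<^sub>R x + d *\<^sub>R y))\<^sup>2 =
    (1 - d) * (norm x)\<^sup>2 + d * (norm y)\<^sup>2 - d * (1 - d) * (norm (x - y))\<^sup>2"
  unfolding power2_norm_eq_inner
  by (simp add: inner_add_left inner_add_right inner_diff_left inner_diff_right
      inner_commute[of y x] algebra_simps power2_eq_square)

lemma Mann_iteration_residuals_summable:
  fixes S :: "'a::real_inner \<Rightarrow> 'a" and x :: "nat \<Rightarrow> 'a"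
  assumes S_norm_le: "\<And>y. norm (S y) \<le> norm y"
    and t_nonneg: "\<And>k. 0 \<le> t k" and t_le_1: "\<And>k. t k \<le> 1"
    and Mann_step: "\<And>k. x (Suc k) = (1 - t k) *\<^sub>R x k + t k *\<^sub>R S (x k)"
  shows "summable (\<lambda>k. t k * (1 - t k) * (norm (x k - S (x k)))\<^sup>2)"
    (is "summable ?c")
proof (rule summableI_nonneg_bounded)
  show "0 \<le> ?c k" for k
    using t_nonneg[of k] t_le_1[of k] by simp
  have decrease: "?c k \<le> (norm (x k))\<^sup>2 - (norm (x (Suc k)))\<^sup>2" for k
  proof -
    have "t k * (norm (S (x k)))\<^sup>2 \<le> t k * (norm (x k))\<^sup>2"
      using S_norm_le t_nonneg by (intro mult_left_mono power_mono) auto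
    then show ?thesis
      unfolding Mann_step power2_norm_affine_combination by (simp add: algebra_simps)
  qed
  show "(\<Sum>k<n. ?c k) \<le> (norm (x 0))\<^sup>2" for n
  proof -
    have "(\<Sum>k<n. ?c k) \<le> (\<Sum>k<n. (norm (x k))\<^sup>2 - (norm (x (Suc k)))\<^sup>2)"
      using decrease by (rule sum_mono)
    also have "\<dots> = (norm (x 0))\<^sup>2 - (norm (x n))\<^sup>2"
      by (rule sum_lessThan_telescope')
    finally show ?thesis
      using zero_le_power2[of "norm (x n)"] by linarith
  qed
qed

lemma frequently_less_if_weighted_summable:
  fixes w e :: "nat \<Rightarrow> real"
  assumes "\<not> summable w" and "summable (\<lambda>k. w k * e k)"
    and "\<And>k. 0 \<le> w k" and "\<epsilon> > 0"
  shows "\<exists>\<^sub>F k in sequentially. e k < \<epsilon>"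
proof (rule ccontr)
  assume "\<not> (\<exists>\<^sub>F k in sequentially. e k < \<epsilon>)"
  then have "\<forall>\<^sub>F k in sequentially. \<epsilon> \<le> e k"
    by (simp add: not_frequently not_less)
  then have "\<forall>\<^sub>F k in sequentially. norm (w k) \<le> w k * e k / \<epsilon>"
    by eventually_elim
      (use assms(3,4) in \<open>simp add: pos_le_divide_eq mult_left_mono\<close>)
  moreover have "summable (\<lambda>k. w k * e k / \<epsilon>)"
    using assms(2) by (rule summable_divide)
  ultimately have "summable w"
    by (rule summable_comparison_test_ev)
  with assms(1) show False
    by contradiction
qed

lemma subseq_tendsto_zero_if_frequently_small:
  fixes f :: "nat \<Rightarrow> 'a::real_normed_vector"
  assumes "\<And>\<epsilon>. \<epsilon> > 0 \<Longrightarrow> \<exists>\<^sub>F k in sequentially. norm (f k) < \<epsilon>"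
  shows "\<exists>r. strict_mono r \<and> (f \<circ> r) \<longlonglongrightarrow> 0"
proof -
  have "\<forall>n m. \<exists>k>m. norm (f k) < 1 / real (Suc n)"
  proof (intro allI)
    fix n m
    have "\<exists>\<^sub>F k in sequentially. norm (f k) < 1 / real (Suc n)"
      by (rule assms) simp
    then show "\<exists>k>m. norm (f k) < 1 / real (Suc n)"
      unfolding frequently_sequentially by (meson Suc_le_eq)
  qed
  then obtain s where s_gt: "\<And>n m. s n m > m"
    and s_norm: "\<And>n m. norm (f (s n m)) < 1 / real (Suc n)"
    by metis
  define r where "r = rec_nat (s 0 0) (\<lambda>n. s (Suc n))"
  have r_0: "r 0 = s 0 0" and r_Suc: "\<And>n. r (Suc n) = s (Suc n) (r n)"
    by (simp_all add: r_def)
  have "strict_mono r"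
    by (simp add: strict_mono_Suc_iff r_Suc s_gt)
  moreover have "norm (f (r n)) < 1 / real (Suc n)" for n
    by (cases n) (simp_all only: r_0 r_Suc s_norm)
  then have "(f \<circ> r) \<longlonglongrightarrow> 0"
    by (intro LIMSEQ_norm_0) simp
  ultimately show ?thesis
    by blast
qed

lemma segmenting_diag_bounds:
  assumes "segmenting a" and "i \<ge> 1"
  shows "0 \<le> a i i" and "a i i \<le> 1"
proof -
  have nonneg: "\<And>j. j \<in> {1..i} \<Longrightarrow> 0 \<le> a i j" and sum: "(\<Sum>j=1..i. a i j) = 1"
    using assms unfolding segmenting_def by auto
  show "0 \<le> a i i"
    using nonneg assms(2) by simp
  show "a i i \<le> 1"
    using member_le_sum[of i "{1..i}" "a i"] nonneg sum assms(2) by simp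
qed

lemma segmenting_iteration_Mann_step:
  fixes S :: "'a::real_vector \<Rightarrow> 'a"
  assumes "segmenting a" and "segmenting_iteration a S x1 vphi phi" and "k \<ge> 1"
  shows "phi (k + 1) = (1 - a (k+1) (k+1)) *\<^sub>R phi k + a (k+1) (k+1) *\<^sub>R S (phi k)"
proof -
  have phi_def: "\<And>i. i \<ge> 1 \<Longrightarrow> phi i = (\<Sum>j=1..i. a i j *\<^sub>R vphi j)"
    and vphi_next: "vphi (Suc k) = S (phi k)"
    using assms(2,3) unfolding segmenting_iteration_def by auto
  have row_next: "\<And>j. 1 \<le> j \<Longrightarrow> j \<le> k \<Longrightarrow> a (k+1) j = (1 - a (k+1) (k+1)) * a k j"
    using assms(1,3) unfolding segmenting_def by auto
  have "phi (k + 1) = (\<Sum>j=1..k. a (k+1) j *\<^sub>R vphi j) + a (k+1) (k+1) *\<^sub>R vphi (k + 1)"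
    using phi_def[of "k + 1"] by simp
  also have "(\<Sum>j=1..k. a (k+1) j *\<^sub>R vphi j) = (\<Sum>j=1..k. (1 - a (k+1) (k+1)) *\<^sub>R (a k j *\<^sub>R vphi j))"
    using row_next by (intro sum.cong) auto
  also have "\<dots> = (1 - a (k+1) (k+1)) *\<^sub>R phi k"
    unfolding phi_def[OF assms(3)] scaleR_sum_right ..
  finally show ?thesis
    by (simp add: vphi_next)
qed

theorem proposition6p6:
  fixes T :: "'a::{real_inner, complete_space} \<Rightarrow> 'a"
    and a :: "nat \<Rightarrow> nat \<Rightarrow> real"
    and x1 :: 'a
    and vphi phi :: "nat \<Rightarrow> 'a"
  assumes "segmenting a"
    and "\<not> summable (\<lambda>k. a (k+1) (k+1) * (1 - a (k+1) (k+1)))"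
    and "segmenting_iteration a (Tbar T) x1 vphi phi"
  shows "\<exists>r. strict_mono r \<and> (\<forall>j. 1 \<le> r j) \<and>
           ((\<lambda>j. phi (r j) - Tbar T (phi (r j))) \<longlonglongrightarrow> 0)"
proof -
  define t where "t k = a (k+2) (k+2)" for k
  define res where "res k = phi (Suc k) - Tbar T (phi (Suc k))" for k
  have t_bounds: "0 \<le> t k" "t k \<le> 1" for k
    using segmenting_diag_bounds[OF assms(1), of "k+2"] by (simp_all add: t_def)
  have "summable (\<lambda>k. t k * (1 - t k) * (norm (res k))\<^sup>2)"
  proof -
    have "phi (Suc (Suc k)) = (1 - t k) *\<^sub>R phi (Suc k) + t k *\<^sub>R Tbar T (phi (Suc k))" for k
      using segmenting_iteration_Mann_step[OF assms(1,3), of "Suc k"] by (simp add: t_def)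
    from Mann_iteration_residuals_summable[where S = "Tbar T" and x = "\<lambda>k. phi (Suc k)",
        OF norm_Tbar_le t_bounds this]
    show ?thesis
      by (simp add: res_def)
  qed
  moreover have "\<not> summable (\<lambda>k. t k * (1 - t k))"
    using assms(2) summable_Suc_iff[of "\<lambda>k. a (k+1) (k+1) * (1 - a (k+1) (k+1))"]
    by (simp add: t_def)
  ultimately have "\<exists>\<^sub>F k in sequentially. norm (res k) < \<epsilon>" if "\<epsilon> > 0" for \<epsilon>
    using frequently_less_if_weighted_summable[of _ _ "\<epsilon>\<^sup>2"] t_bounds that
    by (force elim: frequently_elim1 intro: power2_less_imp_less)
  then obtain r where "strict_mono r" "(res \<circ> r) \<longlonglongrightarrow> 0"
    using subseq_tendsto_zero_if_frequently_small by blast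
  then show ?thesis
    by (intro exI[of _ "Suc \<circ> r"]) (auto simp: strict_mono_Suc_iff res_def o_def)
qed

end
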